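(* The set $S'=\{PQ-QP : P,Q \text{ prime words}\}$ generates the ideal $\mathcal{J}$ (as a two-sided ideal of $\mathcal{A}$).
   Context: $\mathcal{A}$ is the free associative $\mathbb{C}$-algebra on noncommuting generators $L,R$; words are finite products of these letters. A word is balanced if it contains equally many $L$'s and $R$'s. $\mathcal{J}$ is the two-sided ideal generated by $S=\{FG-GF : F,G \text{ nonempty balanced words}\}$. A word is prime if it is nonempty, balanced, and cannot be written as a product of two nonempty balanced words. *)

theory Defs
  imports Complex_Main
begin

text \<open>The free associative C-algebra on two noncommuting letters L, R:
  elements are finitely supported functions from words to complex numbers,
  with convolution (concatenation) product.\<close>

datatype letter = L | R

type_synonym word = "letter list"
type_synonym elem = "word \<Rightarrow> complex"

definition freeAlg :: "elem set" where
  "freeAlg = {f. finite {w. f w \<noteq> 0}}"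

definition mono :: "word \<Rightarrow> elem" where
  "mono u = (\<lambda>v. if v = u then 1 else 0)"

definition add :: "elem \<Rightarrow> elem \<Rightarrow> elem" where
  "add f g = (\<lambda>w. f w + g w)"

definition sub :: "elem \<Rightarrow> elem \<Rightarrow> elem" where
  "sub f g = (\<lambda>w. f w - g w)"

definition mult :: "elem \<Rightarrow> elem \<Rightarrow> elem" where
  "mult f g = (\<lambda>w. \<Sum>i\<in>{0..length w}. f (take i w) * g (drop i w))"

inductive_set ideal_gen :: "elem set \<Rightarrow> elem set" for X :: "elem set" where
  base: "x \<in> X \<Longrightarrow> x \<in> ideal_gen X"
| zero: "(\<lambda>_. 0) \<in> ideal_gen X"
| add: "a \<in> ideal_gen X \<Longrightarrow> b \<in> ideal_gen X \<Longrightarrow> add a b \<in> ideal_gen X"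
| lmult: "f \<in> freeAlg \<Longrightarrow> a \<in> ideal_gen X \<Longrightarrow> mult f a \<in> ideal_gen X"
| rmult: "f \<in> freeAlg \<Longrightarrow> a \<in> ideal_gen X \<Longrightarrow> mult a f \<in> ideal_gen X"

definition balanced :: "word \<Rightarrow> bool" where
  "balanced w \<longleftrightarrow> count_list w L = count_list w R"

definition prime_word :: "word \<Rightarrow> bool" where
  "prime_word w \<longleftrightarrow> w \<noteq> [] \<and> balanced w \<and>
     \<not> (\<exists>u v. u \<noteq> [] \<and> v \<noteq> [] \<and> balanced u \<and> balanced v \<and> w = u @ v)"

definition commut :: "word \<Rightarrow> word \<Rightarrow> elem" where
  "commut F G = sub (mult (mono F) (mono G)) (mult (mono G) (mono F))"

definition genS :: "elem set" where
  "genS = {commut F G | F G. F \<noteq> [] \<and> balanced F \<and> G \<noteq> [] \<and> balanced G}"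

definition genS' :: "elem set" where
  "genS' = {commut P Q | P Q. prime_word P \<and> prime_word Q}"

definition idealJ :: "elem set" where
  "idealJ = ideal_gen genS"

end

theory Submission
  imports Defs
begin

text \<open>Every nonempty balanced word is a concatenation of prime words, and the commutator
  is a derivation in each argument: \<open>[AB, C] = A[B, C] + [A, C]B\<close>.  Splitting both
  arguments into primes therefore writes every generator \<open>[F, G]\<close> of \<open>\<J>\<close> as a combination
  of elements \<open>U[P, Q]V\<close> with \<open>P, Q\<close> prime.\<close>

lemma mult_mono_mono: "mult (mono u) (mono v) = mono (u @ v)"
proof
  fix w
  have split_iff: "(take i w = u \<and> drop i w = v) \<longleftrightarrow> (w = u @ v \<and> i = length u)"
    if "i \<in> {0..length w}" for i
  proof
    assume "take i w = u \<and> drop i w = v"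
    with that show "w = u @ v \<and> i = length u"
      by (metis append_take_drop_id atLeastAtMost_iff length_take min.absorb2)
  qed auto
  have "mult (mono u) (mono v) w
      = (\<Sum>i\<in>{0..length w}. if w = u @ v \<and> i = length u then 1 else 0)"
    unfolding mult_def mono_def by (rule sum.cong) (use split_iff in auto)
  also have "\<dots> = mono (u @ v) w"
    by (cases "w = u @ v") (auto simp: mono_def)
  finally show "mult (mono u) (mono v) w = mono (u @ v) w" .
qed

lemma mono_in_freeAlg: "mono u \<in> freeAlg"
proof -
  have "{w. mono u w \<noteq> 0} \<subseteq> {u}" by (auto simp: mono_def)
  then show ?thesis unfolding freeAlg_def by (simp add: finite_subset)
qed

lemma mult_sub_right: "mult f (sub g h) = sub (mult f g) (mult f h)"
  unfolding mult_def sub_def by (simp add: algebra_simps sum_subtractf)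

lemma mult_sub_left: "mult (sub g h) f = sub (mult g f) (mult h f)"
  unfolding mult_def sub_def by (simp add: algebra_simps sum_subtractf)

lemma commut_conv_mono: "commut F G = sub (mono (F @ G)) (mono (G @ F))"
  unfolding commut_def mult_mono_mono ..

lemma commut_append_left:
  "commut (A @ B) C = add (mult (mono A) (commut B C)) (mult (commut A C) (mono B))"
  unfolding commut_conv_mono mult_sub_right mult_sub_left mult_mono_mono
  by (auto simp: add_def sub_def)

lemma commut_append_right:
  "commut A (B @ C) = add (mult (commut A B) (mono C)) (mult (mono B) (commut A C))"
  unfolding commut_conv_mono mult_sub_right mult_sub_left mult_mono_mono
  by (auto simp: add_def sub_def)

lemma ideal_gen_subset: "X \<subseteq> ideal_gen Y \<Longrightarrow> ideal_gen X \<subseteq> ideal_gen Y"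
proof
  fix x assume "X \<subseteq> ideal_gen Y" "x \<in> ideal_gen X"
  then show "x \<in> ideal_gen Y"
    by (induction rule: ideal_gen.induct[OF \<open>x \<in> ideal_gen X\<close>])
       (auto intro: ideal_gen.intros)
qed

inductive prime_concat :: "word \<Rightarrow> bool" where
  prime: "prime_word P \<Longrightarrow> prime_concat P"
| append: "prime_concat u \<Longrightarrow> prime_concat v \<Longrightarrow> prime_concat (u @ v)"

lemma balanced_imp_prime_concat: "w \<noteq> [] \<Longrightarrow> balanced w \<Longrightarrow> prime_concat w"
proof (induction "length w" arbitrary: w rule: less_induct)
  case less
  show ?case
  proof (cases "prime_word w")
    case True
    then show ?thesis by (rule prime_concat.prime)
  next
    case False
    then obtain u v where "u \<noteq> []" "v \<noteq> []" "balanced u" "balanced v" "w = u @ v"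
      using less.prems unfolding prime_word_def by blast
    then show ?thesis using less.hyps by (auto intro!: prime_concat.append)
  qed
qed

lemma commut_prime_concat_in_ideal:
  assumes "prime_concat F" "prime_concat G"
  shows "commut F G \<in> ideal_gen genS'"
  using assms
proof (induction F arbitrary: G rule: prime_concat.induct)
  case (prime P)
  from prime.prems show ?case
  proof (induction G rule: prime_concat.induct)
    case (prime Q)
    with \<open>prime_word P\<close> show ?case by (auto simp: genS'_def intro: ideal_gen.base)
  next
    case (append u v)
    then show ?case unfolding commut_append_right
      by (intro ideal_gen.add ideal_gen.rmult ideal_gen.lmult mono_in_freeAlg)
  qed
next
  case (append u v)
  then show ?case unfolding commut_append_left
    by (intro ideal_gen.add ideal_gen.rmult ideal_gen.lmult mono_in_freeAlg) auto
qed

theorem lemma4p3: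
  shows "ideal_gen genS' = idealJ"
proof
  have "genS' \<subseteq> genS"
    by (auto simp: genS'_def genS_def prime_word_def)
  then show "ideal_gen genS' \<subseteq> idealJ"
    unfolding idealJ_def by (intro ideal_gen_subset) (auto intro: ideal_gen.base)
  have "genS \<subseteq> ideal_gen genS'"
    by (auto simp: genS_def intro!: commut_prime_concat_in_ideal balanced_imp_prime_concat)
  then show "idealJ \<subseteq> ideal_gen genS'"
    unfolding idealJ_def by (rule ideal_gen_subset)
qed

end
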